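(* Assume (A1) and let $t_n\to\infty$. Let $\phi_n(u)=\frac{1}{\bar F^{(k)}(t_n)}\log(u/t_n)\mathbb I_{u>t_n}$ and $\psi(\phi_n,u)=\int_u^{+\infty}\phi_n(s)\,dF^{(k)}(s)$ for $u\ge0$. Then $\psi(\phi_n,u)=\gamma_{n,k}:=\int\phi_n\,dF^{(k)}$ if $u\le t_n$, and, for any $\delta>0$ with $-1/\gamma_k+\delta<0$, \[ \psi(\phi_n,u)=\log\Big(\frac{u}{t_n}\Big)\frac{\bar F^{(k)}(u)}{\bar F^{(k)}(t_n)}+\gamma_k\Big(\frac{u}{t_n}\Big)^{-1/\gamma_k}+\epsilon_n(u)\Big(\frac{u}{t_n}\Big)^{-1/\gamma_k+\delta}\quad\text{if } u>t_n, \] where $\sup_{u>t_n}|\epsilon_n(u)|\to0$ as $n\to\infty$.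
   Context: Let $K\ge 1$, fix $k\in\{1,\dots,K\}$. Let $X\ge0$ have continuous distribution and cause $\mathcal C\in\{1,\dots,K\}$; let $C\ge0$ be independent with continuous distribution function $G$, $\bar G=1-G$. Let $F^{(j)}(t)=P(X\le t,\mathcal C=j)$, $\bar F^{(j)}(t)=P(X>t,\mathcal C=j)$. Regular variation with index $\alpha$: $f(tx)/f(t)\to x^\alpha$ as $t\to\infty$ for all $x>0$. (A1): for every $j$, $\bar F^{(j)}$ is regularly varying with index $-1/\gamma_j$ ($\gamma_j>0$), and $\bar G$ regularly varying with index $-1/\gamma_C$ ($\gamma_C>0$). *)

theory Defs
  imports "HOL-Probability.Probability"
begin

definition regvar :: "(real \<Rightarrow> real) \<Rightarrow> real \<Rightarrow> bool" where
  "regvar f a \<longleftrightarrow> (\<forall>x>0. ((\<lambda>t. f (t * x) / f t) \<longlongrightarrow> x powr a) at_top)"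

definition subsurv :: "'a measure \<Rightarrow> ('a \<Rightarrow> real) \<Rightarrow> ('a \<Rightarrow> nat) \<Rightarrow> nat \<Rightarrow> real \<Rightarrow> real" where
  "subsurv M X D j t = measure M {\<omega> \<in> space M. X \<omega> > t \<and> D \<omega> = j}"

text \<open>Integral of phi with respect to dF^(j): E[phi(X) 1{cause = j}].\<close>
definition subint :: "'a measure \<Rightarrow> ('a \<Rightarrow> real) \<Rightarrow> ('a \<Rightarrow> nat) \<Rightarrow> nat \<Rightarrow> (real \<Rightarrow> real) \<Rightarrow> real" where
  "subint M X D j \<phi> = (\<integral>\<omega>. \<phi> (X \<omega>) * indicator {\<omega>. D \<omega> = j} \<omega> \<partial>M)"

definition psi :: "'a measure \<Rightarrow> ('a \<Rightarrow> real) \<Rightarrow> ('a \<Rightarrow> nat) \<Rightarrow> nat \<Rightarrow> (real \<Rightarrow> real) \<Rightarrow> real \<Rightarrow> real" where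
  "psi M X D j \<phi> u = subint M X D j (\<lambda>s. indicator {u<..} s * \<phi> s)"

end

theory Submission
  imports Defs
begin

text \<open>Write \<open>F\<close> for the sub-survival function of cause \<open>k\<close>, \<open>t = t\<^sub>n\<close> and \<open>a = 1/\<gamma>\<^sub>k\<close>.
  Splitting \<open>log (X/t) = log (u/t) + \<integral> dx/x\<close> over \<open>(u/t, X/t)\<close> and applying Tonelli gives
  \<open>\<psi>(\<phi>\<^sub>n, u) = log (u/t) F(u)/F(t) + \<integral> F(t x)/F(t) dx/x\<close> over \<open>(u/t, \<infinity>)\<close>.
  Regular variation, uniform on compacts and extended to the tail by a Potter bound, gives
  \<open>|F(t x)/F(t) - x powr (-a)| \<le> \<rho> x powr (\<delta> - a)\<close> for all \<open>x \<ge> 1\<close> once \<open>t\<close> is large; integrating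
  against \<open>dx/x\<close> turns \<open>x powr (-a)\<close> into the main term \<open>\<gamma>\<^sub>k (u/t) powr (-a)\<close> and the error into
  \<open>\<rho>/(a - \<delta>) (u/t) powr (\<delta> - a)\<close>.\<close>

lemma regvar_antimono_pos:
  fixes f :: "real \<Rightarrow> real"
  assumes "antimono f" and "\<And>x. 0 \<le> f x" and "regvar f c"
  shows "0 < f x"
proof -
  have "((\<lambda>t. f (t * 1) / f t) \<longlongrightarrow> 1 powr c) at_top"
    using assms(3) unfolding regvar_def by (metis zero_less_one)
  hence "eventually (\<lambda>t. 1/2 < f (t * 1) / f t) at_top"
    by (rule order_tendstoD) simp
  then obtain T where T: "\<And>t. t \<ge> T \<Longrightarrow> 1/2 < f t / f t"
    by (auto simp: eventually_at_top_linorder)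
  define t where "t = max T x"
  have "f t \<noteq> 0" using T[of t] by (auto simp: t_def)
  hence "0 < f t" using assms(2)[of t] by simp
  also have "f t \<le> f x" by (rule antimonoD[OF assms(1)]) (simp add: t_def)
  finally show ?thesis .
qed

lemma antimono_doubling_power_bound:
  fixes f :: "real \<Rightarrow> real"
  assumes anti: "antimono f" and nonneg: "\<And>x. 0 \<le> f x"
    and "1 \<le> T" "0 < \<eta>" "\<eta> \<le> a"
    and doubling: "\<And>t. T \<le> t \<Longrightarrow> f (t * 2) \<le> 2 powr (\<eta> - a) * f t"
    and "T \<le> s" "1 \<le> x"
  shows "f (s * x) \<le> 2 powr a * x powr (\<eta> - a) * f s"
proof -
  have two_powr_ge_1: "1 \<le> 2 powr a" "1 \<le> 2 powr \<eta>"
    using assms(4,5) by (auto intro!: ge_one_powr_ge_zero)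
  obtain m where "x \<le> 2^m" using real_arch_pow[of 2 x] by (auto intro: less_imp_le)
  with \<open>T \<le> s\<close> \<open>1 \<le> x\<close> show ?thesis
  proof (induction m arbitrary: s x)
    case 0
    thus ?case using two_powr_ge_1 by (auto simp: mult_le_cancel_right1 leD[OF nonneg])
  next
    case (Suc m)
    have "1 \<le> s" using Suc.prems(1) \<open>1 \<le> T\<close> by linarith
    show ?case
    proof (cases "x \<le> 2")
      case True
      have "1 \<le> 2 powr a * 2 powr (\<eta> - a)"
        using two_powr_ge_1 by (simp add: powr_add[symmetric])
      also have "\<dots> \<le> 2 powr a * x powr (\<eta> - a)"
        using True Suc.prems assms(5) by (intro mult_left_mono powr_mono2') auto
      finally have "f s \<le> 2 powr a * x powr (\<eta> - a) * f s"
        using nonneg[of s] by (simp add: mult_le_cancel_right1)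
      moreover have "f (s * x) \<le> f s"
        using Suc.prems \<open>1 \<le> s\<close> by (intro antimonoD[OF anti]) simp
      ultimately show ?thesis by linarith
    next
      case False
      have "f ((s * 2) * (x / 2)) \<le> 2 powr a * (x / 2) powr (\<eta> - a) * f (s * 2)"
        using Suc.prems \<open>1 \<le> s\<close> False by (intro Suc.IH) auto
      also have "\<dots> \<le> 2 powr a * (x / 2) powr (\<eta> - a) * (2 powr (\<eta> - a) * f s)"
        using doubling[OF Suc.prems(1)] by (intro mult_left_mono) auto
      also have "\<dots> = 2 powr a * x powr (\<eta> - a) * f s"
        using False by (simp add: powr_mult[symmetric])
      finally show ?thesis by simp
    qed
  qed
qed

lemma regvar_potter_upper_bound:
  fixes f :: "real \<Rightarrow> real"
  assumes anti: "antimono f" and nonneg: "\<And>x. 0 \<le> f x" and rv: "regvar f (-a)"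
    and "0 < \<eta>" "\<eta> \<le> a"
  obtains T where "0 < T" and "\<And>s x. T \<le> s \<Longrightarrow> 1 \<le> x \<Longrightarrow> f (s * x) \<le> 2 powr a * x powr (\<eta> - a) * f s"
proof -
  have "((\<lambda>t. f (t * 2) / f t) \<longlongrightarrow> 2 powr (-a)) at_top"
    using rv unfolding regvar_def by simp
  moreover have "2 powr (-a) < 2 powr (\<eta> - a)" using \<open>0 < \<eta>\<close> by simp
  ultimately have "eventually (\<lambda>t. f (t * 2) / f t < 2 powr (\<eta> - a)) at_top"
    by (rule order_tendstoD)
  then obtain T0 where T0: "\<And>t. t \<ge> T0 \<Longrightarrow> f (t * 2) / f t < 2 powr (\<eta> - a)"
    by (auto simp: eventually_at_top_linorder)
  define T where "T = max T0 1"
  have doubling: "f (t * 2) \<le> 2 powr (\<eta> - a) * f t" if "T \<le> t" for t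
    using T0[of t] that regvar_antimono_pos[OF anti nonneg rv, of t] by (simp add: T_def divide_less_eq)
  show ?thesis
  proof (rule that)
    show "0 < T" by (simp add: T_def)
    show "f (s * x) \<le> 2 powr a * x powr (\<eta> - a) * f s" if "T \<le> s" "1 \<le> x" for s x
      by (rule antimono_doubling_power_bound[OF anti nonneg _ assms(4,5) doubling that]) (simp add: T_def)
  qed
qed

lemma ex_power_bracket:
  fixes r x :: real
  assumes "1 \<le> x" "1 < r"
  shows "\<exists>i. r^i \<le> x \<and> x < r^Suc i"
proof -
  obtain n where "x < r^n" using real_arch_pow[OF assms(2)] by blast
  moreover have "\<forall>x. 1 \<le> x \<and> x < r^n \<longrightarrow> (\<exists>i. r^i \<le> x \<and> x < r^Suc i)"
    by (induction n) (auto, metis linorder_not_le)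
  ultimately show ?thesis using assms by blast
qed

lemma regvar_uniform_on_compact:
  fixes f :: "real \<Rightarrow> real"
  assumes anti: "antimono f" and nonneg: "\<And>x. 0 \<le> f x" and rv: "regvar f (-a)"
    and "0 < a" "0 < \<theta>"
  shows "eventually (\<lambda>s. \<forall>x\<in>{1..Y}. \<bar>f (s * x) / f s - x powr (-a)\<bar> \<le> \<theta>) at_top"
proof -
  have pos: "\<And>x. 0 < f x" using regvar_antimono_pos[OF anti nonneg rv] .
  define \<theta>' where "\<theta>' = min \<theta> 1"
  have \<theta>': "0 < \<theta>'" "\<theta>' \<le> \<theta>" "\<theta>' \<le> 1" using \<open>0 < \<theta>\<close> unfolding \<theta>'_def by auto
  \<comment> \<open>A geometric grid with ratio r, on which the limit drops by the factor b = 1 - \<theta>'/2 per step;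
    by monotonicity of f and of the limit, convergence on the grid gives uniform convergence.\<close>
  define b where "b = 1 - \<theta>'/2"
  have b: "0 < b" "b < 1" using \<theta>' unfolding b_def by auto
  define r where "r = b powr (-1/a)"
  have "0 < r" using b by (simp add: r_def)
  have r_powr: "r powr (-a) = b" using b \<open>0 < a\<close> by (simp add: r_def powr_powr)
  have "ln r = (-1/a) * ln b" using b by (simp add: r_def ln_powr)
  hence "1 < r" using b \<open>0 < a\<close> \<open>0 < r\<close> by (simp add: ln_gt_zero_iff[symmetric] divide_neg_pos)
  obtain N where N: "Y < r^N" using real_arch_pow[OF \<open>1 < r\<close>] by blast
  define P where "P i = (r^i) powr (-a)" for i :: nat
  have P_Suc: "P (Suc i) = P i * b" for i
    unfolding P_def r_powr[symmetric] using \<open>0 < r\<close> by (simp add: powr_mult[symmetric] mult.commute)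
  have P_le_1: "P i \<le> 1" for i
    unfolding P_def using powr_mono2'[of "-a" 1 "r^i"] \<open>0 < a\<close> \<open>1 < r\<close> by (simp add: one_le_power)
  have "\<forall>i\<in>{..Suc N}. eventually (\<lambda>s. dist (f (s * r^i) / f s) (P i) < \<theta>'/2) at_top"
  proof
    fix i
    have "((\<lambda>s. f (s * r^i) / f s) \<longlongrightarrow> P i) at_top"
      using rv \<open>0 < r\<close> unfolding regvar_def P_def by simp
    thus "eventually (\<lambda>s. dist (f (s * r^i) / f s) (P i) < \<theta>'/2) at_top"
      by (rule tendstoD) (use \<theta>' in simp)
  qed
  hence "eventually (\<lambda>s. \<forall>i\<in>{..Suc N}. dist (f (s * r^i) / f s) (P i) < \<theta>'/2) at_top"
    by (rule eventually_ball_finite[rotated]) simp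
  moreover have "eventually (\<lambda>s. (0::real) < s) at_top" by (rule eventually_gt_at_top)
  ultimately show ?thesis
  proof eventually_elim
    case (elim s)
    have close: "\<bar>f (s * r^j) / f s - P j\<bar> < \<theta>'/2" if "j \<le> Suc N" for j
      using elim(1) that by (simp add: dist_real_def)
    show ?case
    proof
      fix x assume x: "x \<in> {1..Y}"
      obtain i where i: "r^i \<le> x" "x < r^Suc i" using ex_power_bracket[of x r] x \<open>1 < r\<close> by auto
      have "r^i < r^N" using i x N by simp
      hence "i < N" using \<open>1 < r\<close> power_less_imp_less_exp by blast
      hence "\<bar>f (s * r^i) / f s - P i\<bar> < \<theta>'/2" "\<bar>f (s * r^Suc i) / f s - P (Suc i)\<bar> < \<theta>'/2"
        using close[of i] close[of "Suc i"] by simp_all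
      moreover have "f (s * r^Suc i) / f s \<le> f (s * x) / f s" "f (s * x) / f s \<le> f (s * r^i) / f s"
        using i elim(2) pos[of s] by (auto intro!: divide_right_mono antimonoD[OF anti])
      moreover have "P (Suc i) \<le> x powr (-a)" "x powr (-a) \<le> P i"
        unfolding P_def using i x \<open>0 < a\<close> \<open>0 < r\<close> by (auto intro!: powr_mono2')
      moreover have "P i - P (Suc i) \<le> \<theta>'/2"
        using P_le_1[of i] b by (simp add: P_Suc b_def algebra_simps mult_left_le)
      ultimately show "\<bar>f (s * x) / f s - x powr (-a)\<bar> \<le> \<theta>"
        using \<theta>' unfolding abs_less_iff abs_le_iff by linarith
    qed
  qed
qed

lemma regvar_ratio_weighted_bound:
  fixes f :: "real \<Rightarrow> real"
  assumes anti: "antimono f" and nonneg: "\<And>x. 0 \<le> f x" and rv: "regvar f (-a)"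
    and "0 < \<delta>" "\<delta> < a" "0 < \<rho>"
  shows "eventually (\<lambda>s. \<forall>x\<ge>1. \<bar>f (s * x) / f s - x powr (-a)\<bar> \<le> \<rho> * x powr (\<delta> - a)) at_top"
proof -
  define \<eta> where "\<eta> = \<delta>/2"
  have \<eta>: "0 < \<eta>" "\<eta> \<le> a" using assms(4,5) unfolding \<eta>_def by auto
  obtain T where T: "\<And>s x. T \<le> s \<Longrightarrow> 1 \<le> x \<Longrightarrow> f (s * x) \<le> 2 powr a * x powr (\<eta> - a) * f s"
    using regvar_potter_upper_bound[OF anti nonneg rv \<eta>] by blast
  \<comment> \<open>Beyond Y the Potter bound wins, since its exponent is smaller by \<eta>; up to Y use uniform convergence.\<close>
  define B where "B = 2 powr a + 1"
  define Y where "Y = max 1 ((B / \<rho>) powr (1 / \<eta>))"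
  have "1 \<le> Y" by (simp add: Y_def)
  have B_Y: "B * Y powr (-\<eta>) \<le> \<rho>"
  proof -
    have "B / \<rho> = ((B / \<rho>) powr (1 / \<eta>)) powr \<eta>"
      using \<eta> \<open>0 < \<rho>\<close> by (simp add: B_def powr_powr add_pos_nonneg)
    also have "\<dots> \<le> Y powr \<eta>"
      using \<eta> by (intro powr_mono2) (auto simp: Y_def)
    finally show ?thesis
      using \<open>0 < \<rho>\<close> \<open>1 \<le> Y\<close> by (simp add: powr_minus divide_le_eq field_simps)
  qed
  have "eventually (\<lambda>s. \<forall>x\<in>{1..Y}. \<bar>f (s * x) / f s - x powr (-a)\<bar> \<le> \<rho> * Y powr (\<delta> - a)) at_top"
    using \<open>1 \<le> Y\<close> assms(4,5,6) by (intro regvar_uniform_on_compact[OF anti nonneg rv]) auto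
  moreover have "eventually (\<lambda>s. s \<ge> T) at_top" by (rule eventually_ge_at_top)
  ultimately show ?thesis
  proof eventually_elim
    case (elim s)
    show ?case
    proof (intro allI impI)
      fix x :: real assume "x \<ge> 1"
      show "\<bar>f (s * x) / f s - x powr (-a)\<bar> \<le> \<rho> * x powr (\<delta> - a)"
      proof (cases "x \<le> Y")
        case True
        hence "\<bar>f (s * x) / f s - x powr (-a)\<bar> \<le> \<rho> * Y powr (\<delta> - a)" using elim \<open>x \<ge> 1\<close> by auto
        also have "\<dots> \<le> \<rho> * x powr (\<delta> - a)"
          using True \<open>x \<ge> 1\<close> assms(5,6) by (intro mult_left_mono powr_mono2') auto
        finally show ?thesis .
      next
        case False
        have "0 < f s" using regvar_antimono_pos[OF anti nonneg rv] .
        hence "f (s * x) / f s \<le> 2 powr a * x powr (\<eta> - a)"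
          using T[OF elim(2) \<open>x \<ge> 1\<close>] by (simp add: divide_le_eq)
        moreover have "0 \<le> f (s * x) / f s" using nonneg \<open>0 < f s\<close> by simp
        moreover have "x powr (-a) \<le> x powr (\<eta> - a)" using \<open>x \<ge> 1\<close> \<eta> by (intro powr_mono) auto
        moreover have "0 \<le> x powr (-a)" by simp
        ultimately have "\<bar>f (s * x) / f s - x powr (-a)\<bar> \<le> B * x powr (\<eta> - a)"
          unfolding B_def abs_le_iff distrib_right by linarith
        also have "\<dots> = (B * x powr (-\<eta>)) * x powr (\<delta> - a)"
          using \<open>x \<ge> 1\<close> by (simp add: \<eta>_def powr_add[symmetric])
        also have "\<dots> \<le> (B * Y powr (-\<eta>)) * x powr (\<delta> - a)"
          using False \<open>1 \<le> Y\<close> \<eta> by (intro mult_right_mono mult_left_mono powr_mono2') (auto simp: B_def add_nonneg_nonneg)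
        also have "\<dots> \<le> \<rho> * x powr (\<delta> - a)" using B_Y by (intro mult_right_mono) auto
        finally show ?thesis .
      qed
    qed
  qed
qed

lemma nn_integral_inverse_interval:
  fixes y z c :: real
  assumes "0 < y" "y < z" "0 \<le> c"
  shows "(\<integral>\<^sup>+x. ennreal (if y < x \<and> x < z then c / x else 0) \<partial>lborel) = ennreal (c * (ln z - ln y))"
proof -
  have "((\<lambda>x. c / x) has_integral (c * ln z - c * ln y)) {y..z}"
  proof (rule fundamental_theorem_of_calculus)
    fix x assume "x \<in> {y..z}"
    hence "0 < x" using assms by simp
    thus "((\<lambda>x. c * ln x) has_vector_derivative c / x) (at x within {y..z})"
      by (auto intro!: derivative_eq_intros simp: has_real_derivative_iff_has_vector_derivative[symmetric])
  qed (use assms in simp)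
  hence "(\<integral>\<^sup>+x. ennreal (c / x) * indicator {y..z} x \<partial>lborel) = ennreal (c * ln z - c * ln y)"
    using assms by (intro nn_integral_has_integral_lebesgue') auto
  moreover have "AE x in lborel. ennreal (if y < x \<and> x < z then c / x else 0) = ennreal (c / x) * indicator {y..z} x"
    using AE_lborel_singleton[of y] AE_lborel_singleton[of z] by eventually_elim (auto simp: indicator_def)
  ultimately show ?thesis by (simp add: nn_integral_cong_AE algebra_simps)
qed

lemma nn_integral_power_tail:
  fixes y c K :: real
  assumes "0 < y" "c < 0" "0 \<le> K"
  shows "(\<integral>\<^sup>+x. ennreal (indicator {y<..} x * (K * (x powr c / x))) \<partial>lborel) = ennreal (K * y powr c / (-c))"
proof -
  have "(\<integral>\<^sup>+x. ennreal (K * x powr (c - 1)) * indicator {y..} x \<partial>lborel) = ennreal (0 - K * y powr c / c)"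
  proof (rule nn_integral_FTC_atLeast)
    fix x :: real assume "y \<le> x"
    hence "0 < x" using assms by simp
    thus "((\<lambda>x. K * x powr c / c) has_real_derivative K * x powr (c - 1)) (at x)"
      using assms by (auto intro!: derivative_eq_intros)
  next
    have "((\<lambda>x. x powr c) \<longlongrightarrow> 0) at_top"
      using assms by (intro tendsto_neg_powr filterlim_ident) auto
    hence "((\<lambda>x. K * x powr c / c) \<longlongrightarrow> K * 0 / c) at_top"
      using assms by (intro tendsto_intros) auto
    thus "((\<lambda>x. K * x powr c / c) \<longlongrightarrow> 0) at_top" by simp
  qed (use assms in auto)
  moreover have "AE x in lborel. ennreal (indicator {y<..} x * (K * (x powr c / x)))
      = ennreal (K * x powr (c - 1)) * indicator {y..} x"
    using AE_lborel_singleton[of y] by eventually_elim (use assms in \<open>auto simp: indicator_def powr_diff\<close>)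
  ultimately show ?thesis by (simp add: nn_integral_cong_AE)
qed

lemma nn_integral_tail_near_power:
  fixes g :: "real \<Rightarrow> real"
  assumes [measurable]: "g \<in> borel_measurable borel"
    and "0 < y" "0 < a" "\<delta> < a" "0 \<le> \<rho>"
    and g_nonneg: "\<And>x. y < x \<Longrightarrow> 0 \<le> g x"
    and g_near: "\<And>x. y < x \<Longrightarrow> \<bar>g x - x powr (-a)\<bar> \<le> \<rho> * x powr (\<delta> - a)"
  obtains J where "(\<integral>\<^sup>+x. ennreal (indicator {y<..} x * (g x / x)) \<partial>lborel) = ennreal J"
    and "0 \<le> J" and "\<bar>J - y powr (-a) / a\<bar> \<le> \<rho> * y powr (\<delta> - a) / (a - \<delta>)"
proof -
  define G where "G = (\<integral>\<^sup>+x. ennreal (indicator {y<..} x * (g x / x)) \<partial>lborel)"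
  define P where "P = y powr (-a) / a"
  define H where "H = \<rho> * y powr (\<delta> - a) / (a - \<delta>)"
  define p where "p x = indicator {y<..} x * (1 * (x powr (-a) / x))" for x :: real
  define h where "h x = indicator {y<..} x * (\<rho> * (x powr (\<delta> - a) / x))" for x :: real
  have int_p: "(\<integral>\<^sup>+x. ennreal (p x) \<partial>lborel) = ennreal P"
    using nn_integral_power_tail[of y "-a" 1] assms(2,3) by (simp add: p_def P_def)
  have int_h: "(\<integral>\<^sup>+x. ennreal (h x) \<partial>lborel) = ennreal H"
    using nn_integral_power_tail[of y "\<delta> - a" \<rho>] assms(2,4,5) by (simp add: h_def H_def)
  have [measurable]: "p \<in> borel_measurable borel" "h \<in> borel_measurable borel"
    by (simp_all add: p_def[abs_def] h_def[abs_def])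
  have "0 \<le> P" "0 \<le> H" using assms(3,4,5) by (simp_all add: P_def H_def)
  have le_plus: "ennreal u \<le> ennreal v + ennreal w" if "u \<le> v + w" "0 \<le> v" "0 \<le> w" for u v w :: real
    using that by (simp add: ennreal_plus[symmetric] ennreal_leI del: ennreal_plus)
  have "indicator {y<..} x * (g x / x) \<le> p x + h x \<and> p x \<le> indicator {y<..} x * (g x / x) + h x" for x
    using g_near[of x] \<open>0 < y\<close>
    by (cases "y < x") (auto simp: p_def h_def abs_le_iff add_divide_distrib[symmetric] divide_right_mono)
  moreover have "0 \<le> p x" "0 \<le> h x" "0 \<le> indicator {y<..} x * (g x / x)" for x
    using \<open>0 < y\<close> \<open>0 \<le> \<rho>\<close> g_nonneg[of x] by (auto simp: p_def h_def indicator_def)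
  ultimately have "G \<le> (\<integral>\<^sup>+x. ennreal (p x) + ennreal (h x) \<partial>lborel)"
    and "ennreal P \<le> (\<integral>\<^sup>+x. ennreal (indicator {y<..} x * (g x / x)) + ennreal (h x) \<partial>lborel)"
    unfolding G_def int_p[symmetric] by (auto intro!: nn_integral_mono le_plus)
  hence G_le: "G \<le> ennreal P + ennreal H" and P_le: "ennreal P \<le> G + ennreal H"
    by (simp_all add: nn_integral_add int_p int_h G_def)
  then obtain J where G: "G = ennreal J" and "0 \<le> J"
    using \<open>0 \<le> P\<close> \<open>0 \<le> H\<close> by (metis ennreal_add_eq_top ennreal_cases ennreal_neq_top top.extremum_uniqueI)
  have "J \<le> P + H" "P \<le> J + H"
    using G_le P_le \<open>0 \<le> J\<close> \<open>0 \<le> P\<close> \<open>0 \<le> H\<close> unfolding G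
    by (simp_all add: ennreal_plus[symmetric] del: ennreal_plus)
  thus ?thesis using that[of J] G \<open>0 \<le> J\<close> by (simp add: G_def P_def H_def abs_le_iff)
qed

lemma borel_measurable_antimono:
  fixes f :: "real \<Rightarrow> real"
  assumes "antimono f"
  shows "f \<in> borel_measurable borel"
proof -
  have "mono (\<lambda>x. - f x)" using assms by (auto simp: mono_def antimono_def)
  hence "(\<lambda>x. - (- f x)) \<in> borel_measurable borel" by (intro borel_measurable_uminus borel_measurable_mono)
  thus ?thesis by simp
qed

lemma subsurv_antimono:
  assumes "finite_measure M" and [measurable]: "X \<in> borel_measurable M" "D \<in> measurable M (count_space UNIV)"
  shows "antimono (subsurv M X D j)"
proof
  fix x y :: real assume "x \<le> y"
  thus "subsurv M X D j y \<le> subsurv M X D j x"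
    unfolding subsurv_def by (intro finite_measure.finite_measure_mono[OF assms(1)]) auto
qed

lemma nn_integral_log_excess:
  fixes X :: "'a \<Rightarrow> real" and D :: "'a \<Rightarrow> nat"
  assumes "finite_measure M" and [measurable]: "X \<in> borel_measurable M" "D \<in> measurable M (count_space UNIV)"
    and "0 < s" "s < u" "0 \<le> c"
  shows "(\<integral>\<^sup>+\<omega>. ennreal (if u < X \<omega> \<and> D \<omega> = k then c * (ln (X \<omega> / s) - ln (u / s)) else 0) \<partial>M)
    = (\<integral>\<^sup>+x. ennreal (indicator {u/s<..} x * (c * subsurv M X D k (s * x) / x)) \<partial>lborel)"
proof -
  interpret finite_measure M by (rule assms(1))
  define y where "y = u / s"
  have "1 < y" using assms(4,5) by (simp add: y_def)
  \<comment> \<open>Write the logarithmic excess as an integral of 1/x, then swap the integrals.\<close>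
  define q where "q \<omega> x = ennreal (if u < X \<omega> \<and> D \<omega> = k \<and> y < x \<and> s * x < X \<omega> then c / x else 0)" for \<omega> x
  have "ennreal (if u < X \<omega> \<and> D \<omega> = k then c * (ln (X \<omega> / s) - ln y) else 0) = (\<integral>\<^sup>+x. q \<omega> x \<partial>lborel)" for \<omega>
  proof (cases "u < X \<omega> \<and> D \<omega> = k")
    case True
    hence "y < X \<omega> / s" using assms(4) by (simp add: y_def divide_strict_right_mono)
    moreover have "(s * x < X \<omega>) = (x < X \<omega> / s)" for x using assms(4) by (simp add: field_simps)
    ultimately show ?thesis
      using True nn_integral_inverse_interval[of y "X \<omega> / s" c] \<open>1 < y\<close> assms(6) by (simp add: q_def)
  qed (auto simp: q_def)
  hence "(\<integral>\<^sup>+\<omega>. ennreal (if u < X \<omega> \<and> D \<omega> = k then c * (ln (X \<omega> / s) - ln y) else 0) \<partial>M)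
      = (\<integral>\<^sup>+\<omega>. (\<integral>\<^sup>+x. q \<omega> x \<partial>lborel) \<partial>M)" by simp
  also have "\<dots> = (\<integral>\<^sup>+x. (\<integral>\<^sup>+\<omega>. q \<omega> x \<partial>M) \<partial>lborel)"
    by (rule pair_sigma_finite.Fubini'[symmetric])
      (auto simp: pair_sigma_finite_def q_def sigma_finite_measure_axioms sigma_finite_lborel)
  also have "\<dots> = (\<integral>\<^sup>+x. ennreal (indicator {y<..} x * (c * subsurv M X D k (s * x) / x)) \<partial>lborel)"
  proof (rule nn_integral_cong)
    fix x :: real
    show "(\<integral>\<^sup>+\<omega>. q \<omega> x \<partial>M) = ennreal (indicator {y<..} x * (c * subsurv M X D k (s * x) / x))"
    proof (cases "y < x")
      case True
      have "u < s * x" using True assms(4) by (simp add: y_def field_simps)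
      hence "(\<integral>\<^sup>+\<omega>. q \<omega> x \<partial>M) = (\<integral>\<^sup>+\<omega>. ennreal (c / x) * indicator {\<omega>\<in>space M. s * x < X \<omega> \<and> D \<omega> = k} \<omega> \<partial>M)"
        using True by (intro nn_integral_cong) (auto simp: q_def indicator_def)
      also have "\<dots> = ennreal (c / x) * ennreal (subsurv M X D k (s * x))"
        by (simp add: nn_integral_cmult_indicator emeasure_eq_measure subsurv_def)
      finally show ?thesis
        using True \<open>1 < y\<close> assms(6) by (simp add: ennreal_mult[symmetric] subsurv_def)
    qed (simp add: q_def)
  qed
  finally show ?thesis unfolding y_def .
qed

lemma nn_integral_log_kernel_tail:
  fixes X :: "'a \<Rightarrow> real" and D :: "'a \<Rightarrow> nat"
  assumes "finite_measure M" and [measurable]: "X \<in> borel_measurable M" "D \<in> measurable M (count_space UNIV)"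
    and "0 < s" "s < u" "0 \<le> c"
  shows "(\<integral>\<^sup>+\<omega>. ennreal (indicator {u<..} (X \<omega>) * (c * ln (X \<omega> / s) * indicator {s<..} (X \<omega>)) * indicator {\<omega>. D \<omega> = k} \<omega>) \<partial>M)
    = ennreal (c * ln (u / s) * subsurv M X D k u)
      + (\<integral>\<^sup>+x. ennreal (indicator {u/s<..} x * (c * subsurv M X D k (s * x) / x)) \<partial>lborel)"
proof -
  interpret finite_measure M by (rule assms(1))
  define E where "E = {\<omega>\<in>space M. u < X \<omega> \<and> D \<omega> = k}"
  have "0 < ln (u / s)" using assms(4,5) by simp
  have split: "ennreal (indicator {u<..} (X \<omega>) * (c * ln (X \<omega> / s) * indicator {s<..} (X \<omega>)) * indicator {\<omega>. D \<omega> = k} \<omega>)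
     = ennreal (c * ln (u / s)) * indicator E \<omega>
       + ennreal (if u < X \<omega> \<and> D \<omega> = k then c * (ln (X \<omega> / s) - ln (u / s)) else 0)"
    if "\<omega> \<in> space M" for \<omega>
  proof (cases "u < X \<omega> \<and> D \<omega> = k")
    case True
    hence "ln (u / s) < ln (X \<omega> / s)" using assms(4,5) by (simp add: divide_strict_right_mono)
    hence "0 \<le> c * (ln (X \<omega> / s) - ln (u / s))" using assms(6) by simp
    hence "ennreal (c * ln (X \<omega> / s)) = ennreal (c * ln (u / s)) + ennreal (c * (ln (X \<omega> / s) - ln (u / s)))"
      using assms(6) \<open>0 < ln (u / s)\<close> by (subst ennreal_plus[symmetric]) (auto simp: algebra_simps)
    thus ?thesis using True that assms(4,5) by (simp add: E_def)
  qed (auto simp: E_def)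
  have "(\<integral>\<^sup>+\<omega>. ennreal (indicator {u<..} (X \<omega>) * (c * ln (X \<omega> / s) * indicator {s<..} (X \<omega>)) * indicator {\<omega>. D \<omega> = k} \<omega>) \<partial>M)
    = (\<integral>\<^sup>+\<omega>. ennreal (c * ln (u / s)) * indicator E \<omega>
        + ennreal (if u < X \<omega> \<and> D \<omega> = k then c * (ln (X \<omega> / s) - ln (u / s)) else 0) \<partial>M)"
    by (intro nn_integral_cong split)
  also have "\<dots> = (\<integral>\<^sup>+\<omega>. ennreal (c * ln (u / s)) * indicator E \<omega> \<partial>M)
      + (\<integral>\<^sup>+\<omega>. ennreal (if u < X \<omega> \<and> D \<omega> = k then c * (ln (X \<omega> / s) - ln (u / s)) else 0) \<partial>M)"
    by (rule nn_integral_add) (auto simp: E_def)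
  also have "(\<integral>\<^sup>+\<omega>. ennreal (c * ln (u / s)) * indicator E \<omega> \<partial>M) = ennreal (c * ln (u / s) * subsurv M X D k u)"
    using assms(6) \<open>0 < ln (u / s)\<close>
    by (simp add: E_def nn_integral_cmult_indicator emeasure_eq_measure subsurv_def ennreal_mult)
  finally show ?thesis
    using nn_integral_log_excess[OF assms] by simp
qed

lemma psi_log_kernel_near_power:
  fixes M :: "'a measure" and X :: "'a \<Rightarrow> real" and D :: "'a \<Rightarrow> nat" and k :: nat
  defines "F \<equiv> subsurv M X D k"
  assumes "finite_measure M" and [measurable]: "X \<in> borel_measurable M" "D \<in> measurable M (count_space UNIV)"
    and "0 < s" "s < u" "0 < a" "\<delta> < a" "0 \<le> \<rho>"
    and near: "\<And>x. 1 \<le> x \<Longrightarrow> \<bar>F (s * x) / F s - x powr (-a)\<bar> \<le> \<rho> * x powr (\<delta> - a)"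
  shows "\<bar>psi M X D k (\<lambda>v. 1 / F s * ln (v / s) * indicator {s<..} v) u
           - ln (u / s) * F u / F s - (u / s) powr (-a) / a\<bar> \<le> \<rho> * (u / s) powr (\<delta> - a) / (a - \<delta>)"
proof -
  have F_nonneg: "0 \<le> F x" for x by (simp add: F_def subsurv_def)
  have [measurable]: "F \<in> borel_measurable borel"
    unfolding F_def by (intro borel_measurable_antimono subsurv_antimono assms(2-4))
  have "1 < u / s" using assms(5,6) by simp
  have near_tail: "\<bar>F (s * x) / F s - x powr (-a)\<bar> \<le> \<rho> * x powr (\<delta> - a)" if "u / s < x" for x
    by (rule near) (use that \<open>1 < u / s\<close> in linarith)
  obtain J where J: "(\<integral>\<^sup>+x. ennreal (indicator {u/s<..} x * (F (s * x) / F s / x)) \<partial>lborel) = ennreal J"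
    and "0 \<le> J" and J_near: "\<bar>J - (u / s) powr (-a) / a\<bar> \<le> \<rho> * (u / s) powr (\<delta> - a) / (a - \<delta>)"
    by (rule nn_integral_tail_near_power[where g = "\<lambda>x. F (s * x) / F s" and y = "u / s" and a = a and \<delta> = \<delta> and \<rho> = \<rho>])
      (use assms(5-9) near_tail F_nonneg in \<open>auto simp del: subsurv_def\<close>)
  have integrand_nonneg: "0 \<le> indicator {u<..} (X \<omega>) * (1 / F s * ln (X \<omega> / s) * indicator {s<..} (X \<omega>)) * indicator {\<omega>. D \<omega> = k} \<omega>" for \<omega>
    using assms(5) F_nonneg[of s] by (auto simp: indicator_def)
  have "psi M X D k (\<lambda>v. 1 / F s * ln (v / s) * indicator {s<..} v) u
    = enn2real (\<integral>\<^sup>+\<omega>. ennreal (indicator {u<..} (X \<omega>) * (1 / F s * ln (X \<omega> / s) * indicator {s<..} (X \<omega>)) * indicator {\<omega>. D \<omega> = k} \<omega>) \<partial>M)"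
    unfolding psi_def subint_def by (rule integral_eq_nn_integral) (measurable, use integrand_nonneg in simp)
  also have "\<dots> = enn2real (ennreal (ln (u / s) * F u / F s) + ennreal J)"
    using nn_integral_log_kernel_tail[OF assms(2-6), of "1 / F s" k] F_nonneg J by (simp add: F_def)
  also have "\<dots> = ln (u / s) * F u / F s + J"
    using \<open>1 < u / s\<close> F_nonneg \<open>0 \<le> J\<close> by (simp add: ennreal_plus[symmetric] del: ennreal_plus)
  finally show ?thesis using J_near by simp
qed

lemma psi_log_kernel_asymptotics:
  fixes M :: "'a measure" and X :: "'a \<Rightarrow> real" and D :: "'a \<Rightarrow> nat" and k :: nat
  defines "F \<equiv> subsurv M X D k"
  assumes "finite_measure M" and [measurable]: "X \<in> borel_measurable M" "D \<in> measurable M (count_space UNIV)"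
    and "0 < \<gamma>" "regvar F (- 1 / \<gamma>)" "0 < \<delta>" "- 1 / \<gamma> + \<delta> < 0" "0 < e"
  shows "eventually (\<lambda>s. \<forall>u>s. \<bar>psi M X D k (\<lambda>v. 1 / F s * ln (v / s) * indicator {s<..} v) u
           - (ln (u / s) * F u / F s + \<gamma> * (u / s) powr (- 1 / \<gamma>))\<bar> \<le> e * (u / s) powr (- 1 / \<gamma> + \<delta>)) at_top"
proof -
  define a where "a = 1 / \<gamma>"
  have "0 < a" "\<delta> < a" "- 1 / \<gamma> = - a" "\<gamma> = 1 / a" using assms(5,8) by (simp_all add: a_def)
  have "regvar F (-a)" using assms(6) \<open>- 1 / \<gamma> = - a\<close> by simp
  moreover have "antimono F" unfolding F_def by (rule subsurv_antimono[OF assms(2-4)])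
  moreover have "0 \<le> F x" for x by (simp add: F_def subsurv_def)
  ultimately have "eventually (\<lambda>s. \<forall>x\<ge>1. \<bar>F (s * x) / F s - x powr (-a)\<bar> \<le> e * (a - \<delta>) * x powr (\<delta> - a)) at_top"
    using \<open>\<delta> < a\<close> assms(7,9) by (intro regvar_ratio_weighted_bound) auto
  moreover have "eventually (\<lambda>s::real. 0 < s) at_top" by (rule eventually_gt_at_top)
  ultimately show ?thesis
  proof eventually_elim
    case (elim s)
    show ?case
    proof (intro allI impI)
      fix u assume "s < u"
      have "\<bar>psi M X D k (\<lambda>v. 1 / F s * ln (v / s) * indicator {s<..} v) u
          - (ln (u / s) * F u / F s + \<gamma> * (u / s) powr (- 1 / \<gamma>))\<bar>
          = \<bar>psi M X D k (\<lambda>v. 1 / F s * ln (v / s) * indicator {s<..} v) u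
          - ln (u / s) * F u / F s - (u / s) powr (-a) / a\<bar>"
        using \<open>- 1 / \<gamma> = - a\<close> \<open>\<gamma> = 1 / a\<close> by (simp add: algebra_simps)
      also have "\<dots> \<le> e * (a - \<delta>) * (u / s) powr (\<delta> - a) / (a - \<delta>)"
        unfolding F_def using \<open>0 < a\<close> \<open>\<delta> < a\<close> assms(9) elim \<open>s < u\<close>
        by (intro psi_log_kernel_near_power[OF assms(2-4)]) (auto simp: F_def)
      also have "\<dots> = e * (u / s) powr (- 1 / \<gamma> + \<delta>)"
        using \<open>\<delta> < a\<close> \<open>- 1 / \<gamma> = - a\<close> by simp
      finally show "\<bar>psi M X D k (\<lambda>v. 1 / F s * ln (v / s) * indicator {s<..} v) u
          - (ln (u / s) * F u / F s + \<gamma> * (u / s) powr (- 1 / \<gamma>))\<bar> \<le> e * (u / s) powr (- 1 / \<gamma> + \<delta>)" .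
    qed
  qed
qed

lemma ex_uniformly_vanishing_relative_error:
  fixes \<Psi> A W :: "real \<Rightarrow> real \<Rightarrow> real" and t :: "nat \<Rightarrow> real"
  assumes "filterlim t at_top sequentially"
    and W_pos: "\<And>s u. 0 < s \<Longrightarrow> s < u \<Longrightarrow> 0 < W s u"
    and close: "\<And>e. 0 < e \<Longrightarrow> eventually (\<lambda>s. \<forall>u>s. \<bar>\<Psi> s u - A s u\<bar> \<le> e * W s u) at_top"
  shows "\<exists>\<epsilon>. (\<forall>n u. 0 < t n \<and> t n < u \<longrightarrow> \<Psi> (t n) u = A (t n) u + \<epsilon> n u * W (t n) u)
           \<and> (\<forall>e>0. eventually (\<lambda>n. \<forall>u>t n. \<bar>\<epsilon> n u\<bar> \<le> e) sequentially)"
proof (intro exI[of _ "\<lambda>n u. (\<Psi> (t n) u - A (t n) u) / W (t n) u"] conjI allI impI)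
  fix n u assume "0 < t n \<and> t n < u"
  thus "\<Psi> (t n) u = A (t n) u + (\<Psi> (t n) u - A (t n) u) / W (t n) u * W (t n) u"
    using W_pos[of "t n" u] by simp
next
  fix e :: real assume "0 < e"
  have "eventually (\<lambda>s. 0 < s \<and> (\<forall>u>s. \<bar>\<Psi> s u - A s u\<bar> \<le> e * W s u)) at_top"
    using close[OF \<open>0 < e\<close>] eventually_gt_at_top[of 0] by eventually_elim simp
  hence "eventually (\<lambda>n. 0 < t n \<and> (\<forall>u>t n. \<bar>\<Psi> (t n) u - A (t n) u\<bar> \<le> e * W (t n) u)) sequentially"
    using filterlim_iff[THEN iffD1, OF assms(1), rule_format] by blast
  thus "eventually (\<lambda>n. \<forall>u>t n. \<bar>(\<Psi> (t n) u - A (t n) u) / W (t n) u\<bar> \<le> e) sequentially"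
  proof eventually_elim
    case (elim n)
    show ?case
    proof (intro allI impI)
      fix u assume "t n < u"
      thus "\<bar>(\<Psi> (t n) u - A (t n) u) / W (t n) u\<bar> \<le> e"
        using elim W_pos[of "t n" u] by (simp add: abs_divide divide_le_eq)
    qed
  qed
qed

theorem lemma9:
  fixes M :: "'a measure" and X C :: "'a \<Rightarrow> real" and D :: "'a \<Rightarrow> nat"
    and K k :: nat and \<gamma> :: "nat \<Rightarrow> real" and \<gamma>C :: real and t :: "nat \<Rightarrow> real"
  assumes "prob_space M"
    and X_meas: "X \<in> borel_measurable M" and D_meas: "D \<in> measurable M (count_space UNIV)"
    and C_meas: "C \<in> borel_measurable M"
    and X_nonneg: "\<forall>\<omega>\<in>space M. X \<omega> \<ge> 0" and C_nonneg: "\<forall>\<omega>\<in>space M. C \<omega> \<ge> 0"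
    and K: "K \<ge> 1" and k: "k \<in> {1..K}"
    and D_range: "\<forall>\<omega>\<in>space M. D \<omega> \<in> {1..K}"
    and X_cont: "continuous_on UNIV (\<lambda>s. measure M {\<omega> \<in> space M. X \<omega> \<le> s})"
    and C_cont: "continuous_on UNIV (\<lambda>s. measure M {\<omega> \<in> space M. C \<omega> \<le> s})"
    and indep: "\<forall>A\<in>sets borel. \<forall>B\<in>sets (borel \<Otimes>\<^sub>M count_space UNIV).
       measure M {\<omega> \<in> space M. C \<omega> \<in> A \<and> (X \<omega>, D \<omega>) \<in> B}
       = measure M {\<omega> \<in> space M. C \<omega> \<in> A} * measure M {\<omega> \<in> space M. (X \<omega>, D \<omega>) \<in> B}"
    and A1_F: "\<forall>j\<in>{1..K}. \<gamma> j > 0 \<and> regvar (subsurv M X D j) (- 1 / \<gamma> j)"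
    and A1_G: "\<gamma>C > 0"
      "regvar (\<lambda>s. 1 - measure M {\<omega> \<in> space M. C \<omega> \<le> s}) (- 1 / \<gamma>C)"
    and t_lim: "filterlim t at_top sequentially"
  defines "\<phi> \<equiv> (\<lambda>n u. 1 / subsurv M X D k (t n) * ln (u / t n) * indicator {t n<..} u)"
  shows "(\<forall>n u. 0 \<le> u \<and> u \<le> t n \<longrightarrow> psi M X D k (\<phi> n) u = subint M X D k (\<phi> n))
    \<and> (\<forall>\<delta>>0. - 1 / \<gamma> k + \<delta> < 0 \<longrightarrow>
        (\<exists>\<epsilon> :: nat \<Rightarrow> real \<Rightarrow> real.
          (\<forall>n u. 0 < t n \<and> t n < u \<longrightarrow>
             psi M X D k (\<phi> n) u =
               ln (u / t n) * subsurv M X D k u / subsurv M X D k (t n)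
               + \<gamma> k * (u / t n) powr (- 1 / \<gamma> k)
               + \<epsilon> n u * (u / t n) powr (- 1 / \<gamma> k + \<delta>))
          \<and> (\<forall>e>0. eventually (\<lambda>n. \<forall>u>t n. \<bar>\<epsilon> n u\<bar> \<le> e) sequentially)))"
proof -
  \<comment> \<open>Only measurability of \<open>X\<close>, \<open>D\<close> and (A1) for cause \<open>k\<close> are used.\<close>
  interpret prob_space M by (fact assms(1))
  have "0 < \<gamma> k" and rv: "regvar (subsurv M X D k) (- 1 / \<gamma> k)" using A1_F k by auto
  have "psi M X D k (\<phi> n) u = subint M X D k (\<phi> n)" if "u \<le> t n" for n u
    using that unfolding psi_def \<phi>_def by (auto intro!: arg_cong[where f = "subint M X D k"] simp: indicator_def)
  moreover have "\<exists>\<epsilon> :: nat \<Rightarrow> real \<Rightarrow> real.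
          (\<forall>n u. 0 < t n \<and> t n < u \<longrightarrow>
             psi M X D k (\<phi> n) u =
               ln (u / t n) * subsurv M X D k u / subsurv M X D k (t n)
               + \<gamma> k * (u / t n) powr (- 1 / \<gamma> k)
               + \<epsilon> n u * (u / t n) powr (- 1 / \<gamma> k + \<delta>))
          \<and> (\<forall>e>0. eventually (\<lambda>n. \<forall>u>t n. \<bar>\<epsilon> n u\<bar> \<le> e) sequentially)"
    if "0 < \<delta>" "- 1 / \<gamma> k + \<delta> < 0" for \<delta>
    unfolding \<phi>_def
    by (rule ex_uniformly_vanishing_relative_error[OF t_lim,
          where \<Psi> = "\<lambda>s u. psi M X D k (\<lambda>v. 1 / subsurv M X D k s * ln (v / s) * indicator {s<..} v) u"
            and A = "\<lambda>s u. ln (u / s) * subsurv M X D k u / subsurv M X D k s + \<gamma> k * (u / s) powr (- 1 / \<gamma> k)"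
            and W = "\<lambda>s u. (u / s) powr (- 1 / \<gamma> k + \<delta>)"])
      (use psi_log_kernel_asymptotics[OF finite_measure_axioms X_meas D_meas \<open>0 < \<gamma> k\<close> rv that] in simp_all)
  ultimately show ?thesis by blast
qed

end
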